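(* Let $m,n\in\mathbb{Z}\setminus\{0\}$. Then the image of the modular function of $\mathrm{G}(m,n)$ is $\left|\frac{m}{n}\right|^{\mathbb{Z}}$.
   Context: $\mathrm{BS}(m,n) = \langle a,t \mid t a^m t^{-1} = a^n\rangle$ is the Baumslag–Solitar group, in which $\langle a\rangle$ is commensurated. For a Hecke pair $\Lambda\leq\Gamma$ (i.e. $[\Lambda:\Lambda\cap g\Lambda g^{-1}]<\infty$ for all $g$), let $\iota:\Gamma\to\mathrm{Sym}(\Gamma/\Lambda)$ be the left multiplication action; with the topology of pointwise convergence on $\mathrm{Sym}(\Gamma/\Lambda)$, the Schlichting completion is $\Gamma/\!\!/\Lambda := \overline{\iota(\Gamma)}$, a totally disconnected locally compact group. $\mathrm{G}(m,n) := \mathrm{BS}(m,n)/\!\!/\langle a\rangle$. *)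

theory Defs
  imports "HOL-Algebra.Bij" "HOL-Algebra.Coset" Complex_Main
begin

datatype gen = A | T

type_synonym word = "(gen \<times> bool) list"  \<comment> \<open>letter (x, True) means x inverse\<close>

definition apow :: "int \<Rightarrow> word" where
  "apow k = (if 0 \<le> k then replicate (nat k) (A, False) else replicate (nat (- k)) (A, True))"

text \<open>Equality in BS(m,n) = < a, t | t a^m t^-1 = a^n >: the congruence on words generated
  by free cancellation and the defining relator.\<close>
inductive bs_eq :: "int \<Rightarrow> int \<Rightarrow> word \<Rightarrow> word \<Rightarrow> bool" for m n where
  bs_refl: "bs_eq m n w w"
| bs_sym: "bs_eq m n u v \<Longrightarrow> bs_eq m n v u"
| bs_trans: "bs_eq m n u v \<Longrightarrow> bs_eq m n v w \<Longrightarrow> bs_eq m n u w"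
| bs_ctx: "bs_eq m n u v \<Longrightarrow> bs_eq m n (x @ u @ y) (x @ v @ y)"
| bs_cancel: "bs_eq m n [(g, b), (g, \<not> b)] []"
| bs_rel: "bs_eq m n ([(T, False)] @ apow m @ [(T, True)]) (apow n)"

definition bs_coset :: "int \<Rightarrow> int \<Rightarrow> word \<Rightarrow> word set" where
  "bs_coset m n w = {v. \<exists>k. bs_eq m n v (w @ apow k)}"

definition bs_cosets :: "int \<Rightarrow> int \<Rightarrow> word set set" where
  "bs_cosets m n = range (bs_coset m n)"

definition bs_iota :: "int \<Rightarrow> int \<Rightarrow> word \<Rightarrow> word set \<Rightarrow> word set" where
  "bs_iota m n g = (\<lambda>C \<in> bs_cosets m n. {u. \<exists>v\<in>C. bs_eq m n u (g @ v)})"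

text \<open>Closure of iota(BS(m,n)) in Sym(BS(m,n)/<a>) for the topology of pointwise convergence
  (basic neighbourhoods of sigma: permutations agreeing with sigma on a finite set).\<close>
definition G_carrier :: "int \<Rightarrow> int \<Rightarrow> (word set \<Rightarrow> word set) set" where
  "G_carrier m n = {\<sigma> \<in> Bij (bs_cosets m n).
     \<forall>F. F \<subseteq> bs_cosets m n \<and> finite F \<longrightarrow> (\<exists>g. \<forall>x\<in>F. bs_iota m n g x = \<sigma> x)}"

definition Gmn :: "int \<Rightarrow> int \<Rightarrow> (word set \<Rightarrow> word set) monoid" where
  "Gmn m n = (BijGroup (bs_cosets m n))\<lparr>carrier := G_carrier m n\<rparr>"

text \<open>The compact open subgroup U = closure of iota(<a>) = stabiliser of the base coset <a>.\<close>
definition G_U :: "int \<Rightarrow> int \<Rightarrow> (word set \<Rightarrow> word set) set" where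
  "G_U m n = {\<sigma> \<in> G_carrier m n. \<sigma> (bs_coset m n []) = bs_coset m n []}"

definition sg_index :: "('a, 'b) monoid_scheme \<Rightarrow> 'a set \<Rightarrow> 'a set \<Rightarrow> nat" where
  "sg_index G H K = card ((\<lambda>h. K #>\<^bsub>G\<^esub> h) ` H)"

definition conj_set :: "('a, 'b) monoid_scheme \<Rightarrow> 'a \<Rightarrow> 'a set \<Rightarrow> 'a set" where
  "conj_set G g U = (\<lambda>u. g \<otimes>\<^bsub>G\<^esub> u \<otimes>\<^bsub>G\<^esub> inv\<^bsub>G\<^esub> g) ` U"

text \<open>Delta(g) = mu(g U g^-1) / mu(U) = [gUg^-1 : gUg^-1 \<inter> U] / [U : U \<inter> gUg^-1].\<close>
definition modular_fn :: "('a, 'b) monoid_scheme \<Rightarrow> 'a set \<Rightarrow> 'a \<Rightarrow> real" where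
  "modular_fn G U g =
     real (sg_index G (conj_set G g U) (conj_set G g U \<inter> U)) /
     real (sg_index G U (U \<inter> conj_set G g U))"

end

theory Submission
  imports Defs "HOL-Algebra.Group_Action"
begin

text \<open>
  G(m,n) acts on the cosets of \<langle>a\<rangle> and U is the stabiliser of the base coset \<langle>a\<rangle>, so by
  orbit-stabiliser, if \<sigma>\<langle>a\<rangle> = g\<langle>a\<rangle> then \<Delta>(\<sigma>) is the size of the Stab(g\<langle>a\<rangle>)-orbit of
  \<langle>a\<rangle> divided by the size of the U-orbit of g\<langle>a\<rangle>. By density of BS(m,n) these orbits are
  {g a^k g^-1 \<langle>a\<rangle>} and {a^k g\<langle>a\<rangle>}, of sizes |q| and p, where pZ = {k. g^-1 a^k g \<in> \<langle>a\<rangle>}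
  and g^-1 a^p g = a^q. The affine action a: x \<mapsto> x + 1, t: x \<mapsto> (n/m) x of BS(m,n) on the
  reals shows that g^-1 a^k g = a^r forces r = (m/n)^(-e) k, where e is the exponent sum of t
  in g. Hence \<Delta>(\<sigma>) = |m/n|^(-e), and every integer e occurs.
\<close>

lemma int_subgroup_eq_multiples:
  fixes S :: "int set"
  assumes diff_closed: "\<And>a b. a \<in> S \<Longrightarrow> b \<in> S \<Longrightarrow> a - b \<in> S"
    and k: "k \<in> S" "k \<noteq> 0"
  shows "\<exists>p>0. S = {j. p dvd j}"
proof -
  have zero: "0 \<in> S"
    using diff_closed[OF k(1) k(1)] by simp
  have "- k \<in> S"
    using diff_closed[OF zero k(1)] by simp
  then have "\<exists>i::nat. 0 < i \<and> int i \<in> S"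
    using k by (intro exI[of _ "nat \<bar>k\<bar>"]) (auto simp: abs_if)
  define p where "p = int (LEAST i. 0 < i \<and> int i \<in> S)"
  have p: "0 < p" "p \<in> S"
    using LeastI_ex[OF \<open>\<exists>i. 0 < i \<and> int i \<in> S\<close>] by (auto simp: p_def)
  have p_min: "p \<le> j" if "j \<in> S" "0 < j" for j
    using Least_le[of "\<lambda>i. 0 < i \<and> int i \<in> S" "nat j"] that by (simp add: p_def)
  have multiples: "p * i \<in> S" for i
  proof (induction i rule: int_induct[where k = 0])
    case base
    show ?case using zero by simp
  next
    case (step1 i)
    show ?case
      using diff_closed[OF step1.IH diff_closed[OF zero p(2)]] by (simp add: algebra_simps)
  next
    case (step2 i)
    show ?case
      using diff_closed[OF step2.IH p(2)] by (simp add: algebra_simps)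
  qed
  have "p dvd j" if j: "j \<in> S" for j
  proof -
    have "j mod p \<in> S"
      using diff_closed[OF j multiples[of "j div p"]] by (simp add: minus_mult_div_eq_mod)
    moreover have "0 \<le> j mod p" "j mod p < p"
      using p(1) by simp_all
    ultimately have "j mod p = 0"
      using p_min by force
    then show ?thesis by presburger
  qed
  then have "S = {j. p dvd j}"
    using multiples by auto
  then show ?thesis
    using p(1) by blast
qed

lemma card_range_periodic_int:
  fixes f :: "int \<Rightarrow> 'a"
  assumes p: "p > 0" and period: "\<And>k l. f k = f l \<longleftrightarrow> p dvd k - l"
  shows "card (range f) = nat p"
proof -
  have "f k = f (k mod p)" for k
    using period by (simp flip: mod_eq_dvd_iff)
  then have "f k \<in> f ` {0..<p}" for k
    by (rule image_eqI) (simp add: p)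
  then have "range f = f ` {0..<p}"
    by blast
  moreover have "inj_on f {0..<p}"
    using period by (auto intro!: inj_onI simp flip: mod_eq_dvd_iff)
  ultimately show ?thesis
    by (simp add: card_image)
qed

section \<open>Permutation groups and the modular function\<close>

definition pointwise_closure :: "'a set \<Rightarrow> ('a \<Rightarrow> 'a) set \<Rightarrow> ('a \<Rightarrow> 'a) set" where
  "pointwise_closure E \<Gamma> =
     {\<sigma> \<in> Bij E. \<forall>F. F \<subseteq> E \<and> finite F \<longrightarrow> (\<exists>\<gamma>\<in>\<Gamma>. \<forall>x\<in>F. \<gamma> x = \<sigma> x)}"

lemma pointwise_closureD:
  "\<sigma> \<in> pointwise_closure E \<Gamma> \<Longrightarrow> F \<subseteq> E \<Longrightarrow> finite F \<Longrightarrow> \<exists>\<gamma>\<in>\<Gamma>. \<forall>x\<in>F. \<gamma> x = \<sigma> x"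
  unfolding pointwise_closure_def by blast

lemma pointwise_closure_compose:
  assumes \<Gamma>: "subgroup \<Gamma> (BijGroup E)"
    and \<sigma>: "\<sigma> \<in> pointwise_closure E \<Gamma>" and \<tau>: "\<tau> \<in> pointwise_closure E \<Gamma>"
  shows "compose E \<sigma> \<tau> \<in> pointwise_closure E \<Gamma>"
proof -
  have \<sigma>\<tau>: "\<sigma> \<in> Bij E" "\<tau> \<in> Bij E"
    using \<sigma> \<tau> by (auto simp: pointwise_closure_def)
  have "\<exists>\<gamma>\<in>\<Gamma>. \<forall>x\<in>F. \<gamma> x = compose E \<sigma> \<tau> x" if F: "F \<subseteq> E" "finite F" for F
  proof -
    obtain \<beta> where \<beta>: "\<beta> \<in> \<Gamma>" "\<forall>x\<in>F. \<beta> x = \<tau> x"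
      using pointwise_closureD[OF \<tau> F] by blast
    have "\<tau> ` F \<subseteq> E"
      using F \<sigma>\<tau>(2) Bij_imp_funcset by blast
    then obtain \<alpha> where \<alpha>: "\<alpha> \<in> \<Gamma>" "\<forall>x\<in>\<tau> ` F. \<alpha> x = \<sigma> x"
      using pointwise_closureD[OF \<sigma>] F by blast
    have "\<alpha> \<otimes>\<^bsub>BijGroup E\<^esub> \<beta> = compose E \<alpha> \<beta>"
      using \<alpha>(1) \<beta>(1) subgroup.subset[OF \<Gamma>] by (auto simp: BijGroup_def)
    then have "compose E \<alpha> \<beta> \<in> \<Gamma>"
      using subgroup.m_closed[OF \<Gamma> \<alpha>(1) \<beta>(1)] by simp
    moreover have "\<forall>x\<in>F. compose E \<alpha> \<beta> x = compose E \<sigma> \<tau> x"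
      using \<alpha>(2) \<beta>(2) F by (auto simp: compose_def)
    ultimately show ?thesis
      by blast
  qed
  then show ?thesis
    using \<sigma>\<tau> by (simp add: pointwise_closure_def compose_Bij)
qed

lemma pointwise_closure_inv:
  assumes \<Gamma>: "subgroup \<Gamma> (BijGroup E)" and \<sigma>: "\<sigma> \<in> pointwise_closure E \<Gamma>"
  shows "inv\<^bsub>BijGroup E\<^esub> \<sigma> \<in> pointwise_closure E \<Gamma>"
proof -
  have \<sigma>_Bij: "\<sigma> \<in> Bij E" and bij: "bij_betw \<sigma> E E"
    using \<sigma> by (auto simp: pointwise_closure_def Bij_def)
  have "\<exists>\<gamma>\<in>\<Gamma>. \<forall>x\<in>F. \<gamma> x = (inv\<^bsub>BijGroup E\<^esub> \<sigma>) x" if F: "F \<subseteq> E" "finite F" for F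
  proof -
    have "inv_into E \<sigma> ` F \<subseteq> E"
      using F bij by (auto simp: bij_betw_def inv_into_into)
    then obtain \<alpha> where \<alpha>: "\<alpha> \<in> \<Gamma>" "\<forall>x\<in>inv_into E \<sigma> ` F. \<alpha> x = \<sigma> x"
      using pointwise_closureD[OF \<sigma>] F by blast
    have \<alpha>_Bij: "\<alpha> \<in> Bij E"
      using \<alpha>(1) subgroup.subset[OF \<Gamma>] by (auto simp: BijGroup_def)
    have "inv_into E \<alpha> x = inv_into E \<sigma> x" if "x \<in> F" for x
    proof -
      have "inv_into E \<sigma> x \<in> E" "\<alpha> (inv_into E \<sigma> x) = x"
        using \<alpha>(2) that F bij by (auto simp: bij_betw_def inv_into_into f_inv_into_f)
      then show ?thesis
        using \<alpha>_Bij by (intro inv_into_f_eq) (auto simp: Bij_def bij_betw_def)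
    qed
    then have "\<forall>x\<in>F. (inv\<^bsub>BijGroup E\<^esub> \<alpha>) x = (inv\<^bsub>BijGroup E\<^esub> \<sigma>) x"
      using F \<alpha>_Bij \<sigma>_Bij by (auto simp: inv_BijGroup)
    then show ?thesis
      using subgroup.m_inv_closed[OF \<Gamma> \<alpha>(1)] by blast
  qed
  then show ?thesis
    using \<sigma>_Bij by (simp add: pointwise_closure_def inv_BijGroup restrict_inv_into_Bij)
qed

lemma subgroup_pointwise_closure:
  assumes \<Gamma>: "subgroup \<Gamma> (BijGroup E)"
  shows "subgroup (pointwise_closure E \<Gamma>) (BijGroup E)"
proof
  show "pointwise_closure E \<Gamma> \<subseteq> carrier (BijGroup E)"
    by (auto simp: pointwise_closure_def BijGroup_def)
  show "\<one>\<^bsub>BijGroup E\<^esub> \<in> pointwise_closure E \<Gamma>"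
    using subgroup.one_closed[OF \<Gamma>]
    by (auto simp: pointwise_closure_def BijGroup_def id_Bij intro!: bexI[of _ "\<lambda>x\<in>E. x"])
  show "\<sigma> \<otimes>\<^bsub>BijGroup E\<^esub> \<tau> \<in> pointwise_closure E \<Gamma>"
    if "\<sigma> \<in> pointwise_closure E \<Gamma>" "\<tau> \<in> pointwise_closure E \<Gamma>" for \<sigma> \<tau>
    using pointwise_closure_compose[OF \<Gamma> that] that by (auto simp: BijGroup_def pointwise_closure_def)
  show "inv\<^bsub>BijGroup E\<^esub> \<sigma> \<in> pointwise_closure E \<Gamma>" if "\<sigma> \<in> pointwise_closure E \<Gamma>" for \<sigma>
    by (rule pointwise_closure_inv[OF \<Gamma> that])
qed

lemma (in group_action) conj_set_stabilizer:
  assumes x: "x \<in> E" and g: "g \<in> carrier G"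
  shows "conj_set G g (stabilizer G \<phi> x) = stabilizer G \<phi> (\<phi> g x)"
proof -
  interpret group G
    using group_hom group_hom.axioms(1) by blast
  have gx: "\<phi> g x \<in> E"
    using element_image g x by blast
  have undo: "\<phi> (inv g) (\<phi> g x) = x"
    using orbit_sym_aux g x by blast
  show ?thesis
  proof (intro equalityI subsetI)
    fix \<tau> assume "\<tau> \<in> conj_set G g (stabilizer G \<phi> x)"
    then obtain u where u: "u \<in> carrier G" "\<phi> u x = x" and \<tau>: "\<tau> = g \<otimes> u \<otimes> inv g"
      by (auto simp: conj_set_def stabilizer_def)
    have "\<phi> \<tau> (\<phi> g x) = \<phi> g (\<phi> u (\<phi> (inv g) (\<phi> g x)))"
      using g u gx x by (simp add: \<tau> composition_rule undo)
    then show "\<tau> \<in> stabilizer G \<phi> (\<phi> g x)"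
      using g u undo by (simp add: \<tau> stabilizer_def)
  next
    fix \<tau> assume "\<tau> \<in> stabilizer G \<phi> (\<phi> g x)"
    then have \<tau>: "\<tau> \<in> carrier G" "\<phi> \<tau> (\<phi> g x) = \<phi> g x"
      by (auto simp: stabilizer_def)
    define u where "u = inv g \<otimes> \<tau> \<otimes> g"
    have "\<phi> u x = \<phi> (inv g) (\<phi> \<tau> (\<phi> g x))"
      using g \<tau> x gx by (simp add: u_def composition_rule undo)
    then have "u \<in> stabilizer G \<phi> x"
      using g \<tau> undo by (simp add: u_def stabilizer_def)
    moreover have "\<tau> = g \<otimes> u \<otimes> inv g"
      using g \<tau> by (simp add: u_def flip: m_assoc) (simp add: m_assoc)
    ultimately show "\<tau> \<in> conj_set G g (stabilizer G \<phi> x)"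
      by (auto simp: conj_set_def)
  qed
qed

lemma group_action_BijGroup: "group_action (BijGroup E) E (\<lambda>\<sigma>. \<sigma>)"
  unfolding group_action_def group_hom_def group_hom_axioms_def
  using group_BijGroup by (auto intro: homI)

lemma (in group_action) restrict_to_subgroup:
  assumes "subgroup H G"
  shows "group_action (G\<lparr>carrier := H\<rparr>) E \<phi>"
proof -
  have "group G"
    using group_hom group_hom.axioms(1) by blast
  then have "group (G\<lparr>carrier := H\<rparr>)"
    by (rule subgroup.subgroup_is_group[OF assms])
  moreover have "\<phi> \<in> hom (G\<lparr>carrier := H\<rparr>) (BijGroup E)"
    using group_hom.hom_closed[OF group_hom] group_hom.hom_mult[OF group_hom] subgroup.subset[OF assms]
    by (intro homI) (simp_all add: subset_iff)
  ultimately show ?thesis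
    unfolding group_action_def group_hom_def group_hom_axioms_def
    using group_BijGroup by blast
qed

lemma (in group_action) sg_index_stabilizer_eq_card_orbit:
  assumes H: "subgroup H G" and y: "y \<in> E"
  shows "sg_index G H (H \<inter> stabilizer G \<phi> y) = card ((\<lambda>h. \<phi> h y) ` H)"
proof -
  let ?H = "G\<lparr>carrier := H\<rparr>"
  interpret H: group_action ?H E \<phi>
    by (rule restrict_to_subgroup[OF H])
  have "stabilizer ?H \<phi> y = H \<inter> stabilizer G \<phi> y"
    using subgroup.subset[OF H] by (auto simp: stabilizer_def)
  moreover have "rcosets\<^bsub>?H\<^esub> K = (\<lambda>h. K #>\<^bsub>G\<^esub> h) ` H" for K
    by (auto simp: RCOSETS_def r_coset_def)
  moreover have "orbit ?H \<phi> y = (\<lambda>h. \<phi> h y) ` H"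
    by (auto simp: orbit_def)
  ultimately show ?thesis
    using bij_betw_same_card[OF H.orbit_stab_fun_is_bij[OF y]] by (simp add: sg_index_def)
qed

lemma (in group_action) modular_fn_stabilizer:
  assumes x: "x \<in> E" and g: "g \<in> carrier G"
  shows "modular_fn G (stabilizer G \<phi> x) g =
           real (card ((\<lambda>h. \<phi> h x) ` stabilizer G \<phi> (\<phi> g x))) /
           real (card ((\<lambda>h. \<phi> h (\<phi> g x)) ` stabilizer G \<phi> x))"
proof -
  have gx: "\<phi> g x \<in> E"
    using element_image g x by blast
  show ?thesis
    unfolding modular_fn_def conj_set_stabilizer[OF x g]
    using sg_index_stabilizer_eq_card_orbit[OF stabilizer_subgroup[OF gx] x]
      sg_index_stabilizer_eq_card_orbit[OF stabilizer_subgroup[OF x] gx]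
    by (simp add: Int_commute)
qed

section \<open>Words, exponent sums and the affine action on the reals\<close>

definition letter_inv :: "gen \<times> bool \<Rightarrow> gen \<times> bool" where
  "letter_inv = apsnd Not"

definition word_inv :: "word \<Rightarrow> word" where
  "word_inv w = rev (map letter_inv w)"

lemma letter_inv_letter_inv [simp]: "letter_inv (letter_inv x) = x"
  by (cases x) (simp add: letter_inv_def)

lemma word_inv_Nil [simp]: "word_inv [] = []"
  by (simp add: word_inv_def)

lemma word_inv_Cons [simp]: "word_inv (x # w) = word_inv w @ [letter_inv x]"
  by (simp add: word_inv_def)

lemma word_inv_append [simp]: "word_inv (u @ v) = word_inv v @ word_inv u"
  by (simp add: word_inv_def)

lemma word_inv_word_inv [simp]: "word_inv (word_inv w) = w"
  by (simp add: word_inv_def rev_map comp_def)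

lemma apow_0 [simp]: "apow 0 = []"
  by (simp add: apow_def)

lemma word_inv_apow [simp]: "word_inv (apow k) = apow (- k)"
  by (simp add: apow_def word_inv_def letter_inv_def rev_map)

fun t_exp :: "gen \<times> bool \<Rightarrow> int" where
  "t_exp (A, b) = 0"
| "t_exp (T, b) = (if b then 1 else -1)"

definition t_exp_sum :: "word \<Rightarrow> int" where
  "t_exp_sum w = sum_list (map t_exp w)"

lemma t_exp_sum_word_inv [simp]: "t_exp_sum (word_inv w) = - t_exp_sum w"
proof -
  have "t_exp (letter_inv x) = - t_exp x" for x
    by (cases x rule: t_exp.cases) (simp_all add: letter_inv_def)
  then show ?thesis
    by (induction w) (simp_all add: t_exp_sum_def)
qed

lemma t_exp_sum_surj: "\<exists>w. t_exp_sum w = k"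
proof -
  have "t_exp_sum (replicate i (T, True)) = int i" "t_exp_sum (replicate i (T, False)) = - int i" for i
    by (induction i) (simp_all add: t_exp_sum_def)
  then have "t_exp_sum (replicate (nat k) (T, True) @ replicate (nat (- k)) (T, False)) = k"
    by (simp add: t_exp_sum_def)
  then show ?thesis ..
qed

fun letter_aff :: "int \<Rightarrow> int \<Rightarrow> gen \<times> bool \<Rightarrow> real \<Rightarrow> real" where
  "letter_aff m n (A, b) x = (if b then x - 1 else x + 1)"
| "letter_aff m n (T, b) x = (real_of_int m / real_of_int n) powi t_exp (T, b) * x"

definition word_aff :: "int \<Rightarrow> int \<Rightarrow> word \<Rightarrow> real \<Rightarrow> real" where
  "word_aff m n w = foldr (letter_aff m n) w"

lemma word_aff_Nil [simp]: "word_aff m n [] x = x"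
  by (simp add: word_aff_def)

lemma word_aff_append [simp]: "word_aff m n (u @ v) x = word_aff m n u (word_aff m n v x)"
  by (simp add: word_aff_def)

lemma word_aff_Cons [simp]: "word_aff m n (y # w) x = letter_aff m n y (word_aff m n w x)"
  by (simp add: word_aff_def)

lemma word_aff_apow: "word_aff m n (apow k) x = x + real_of_int k"
proof -
  have "word_aff m n (replicate i (A, False)) x = x + real i"
    and "word_aff m n (replicate i (A, True)) x = x - real i" for i
    by (induction i) simp_all
  then show ?thesis
    by (simp add: apow_def)
qed

lemma letter_aff_affine:
  "letter_aff m n y x = (real_of_int m / real_of_int n) powi t_exp y * x + letter_aff m n y 0"
  by (cases y rule: t_exp.cases) simp_all

section \<open>Commensuration of \<langle>a\<rangle> in BS(m,n)\<close>

locale baumslag_solitar =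
  fixes m n :: int
  assumes m_nonzero: "m \<noteq> 0" and n_nonzero: "n \<noteq> 0"
begin

abbreviation beq :: "word \<Rightarrow> word \<Rightarrow> bool" where
  "beq \<equiv> bs_eq m n"

abbreviation ratio :: real where
  "ratio \<equiv> real_of_int m / real_of_int n"

lemma ratio_nonzero: "ratio \<noteq> 0"
  using m_nonzero n_nonzero by simp

lemma beq_refl [simp]: "beq u u"
  by (rule bs_refl)

lemma beq_sym: "beq u v \<Longrightarrow> beq v u"
  by (rule bs_sym)

lemma beq_trans [trans]: "beq u v \<Longrightarrow> beq v w \<Longrightarrow> beq u w"
  by (rule bs_trans)

lemma beq_append: "beq u u' \<Longrightarrow> beq v v' \<Longrightarrow> beq (u @ v) (u' @ v')"
  using bs_ctx[of m n u u' "[]" v] bs_ctx[of m n v v' u' "[]"] by (auto intro: beq_trans)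

lemma beq_letter_cancel: "beq [x, letter_inv x] []"
  by (cases x) (simp add: letter_inv_def bs_cancel)

lemma word_inv_right: "beq (w @ word_inv w) []"
proof (induction w)
  case Nil
  then show ?case by simp
next
  case (Cons x w)
  have "beq ([x] @ (w @ word_inv w) @ [letter_inv x]) ([x] @ [] @ [letter_inv x])"
    by (rule bs_ctx[OF Cons.IH])
  then have "beq ((x # w) @ word_inv (x # w)) [x, letter_inv x]"
    by simp
  then show ?case
    using beq_letter_cancel by (rule beq_trans)
qed

lemma word_inv_left: "beq (word_inv w @ w) []"
  using word_inv_right[of "word_inv w"] by simp

lemma beq_conj_cancel: "beq (word_inv g @ (g @ u @ word_inv g) @ g) u"
proof -
  have "word_inv g @ (g @ u @ word_inv g) @ g = (word_inv g @ g) @ u @ (word_inv g @ g)"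
    by simp
  also have "beq \<dots> ([] @ u @ [])"
    by (intro beq_append word_inv_left beq_refl)
  finally show ?thesis
    by simp
qed

lemma beq_conj_iff: "beq (word_inv g @ h @ g) u \<longleftrightarrow> beq h (g @ u @ word_inv g)"
proof
  assume "beq (word_inv g @ h @ g) u"
  then have "beq (g @ (word_inv g @ h @ g) @ word_inv g) (g @ u @ word_inv g)"
    by (rule bs_ctx)
  then show "beq h (g @ u @ word_inv g)"
    using beq_conj_cancel[of "word_inv g" h] by (auto intro: beq_trans beq_sym)
next
  assume "beq h (g @ u @ word_inv g)"
  then have "beq (word_inv g @ h @ g) (word_inv g @ (g @ u @ word_inv g) @ g)"
    by (rule bs_ctx)
  then show "beq (word_inv g @ h @ g) u"
    using beq_conj_cancel by (auto intro: beq_trans)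
qed

lemma beq_word_inv:
  assumes "beq u v"
  shows "beq (word_inv u) (word_inv v)"
proof -
  have "beq (word_inv u) (word_inv u @ v @ word_inv v)"
    using beq_append[OF beq_refl word_inv_right, of "word_inv u" v] by (simp add: beq_sym)
  also have "beq \<dots> (word_inv u @ u @ word_inv v)"
    using bs_ctx[OF beq_sym[OF assms]] .
  also have "beq \<dots> ([] @ word_inv v)"
    using beq_append[OF word_inv_left beq_refl] by simp
  finally show ?thesis
    by simp
qed

lemma apow_succ: "beq (apow j @ [(A, False)]) (apow (j + 1))"
proof (cases "0 \<le> j")
  case True
  then have "nat (j + 1) = Suc (nat j)"
    by simp
  then show ?thesis
    using True by (simp add: apow_def replicate_append_same)
next
  case False
  then obtain i where i: "nat (- j) = Suc i" "nat (- (j + 1)) = i"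
    by (intro that[of "nat (- j) - 1"]) auto
  have "apow j = replicate i (A, True) @ [(A, True)]"
    using False i(1) by (simp add: apow_def replicate_append_same)
  moreover have "apow (j + 1) = replicate i (A, True)"
    using False i(2) by (cases "j = -1") (auto simp: apow_def)
  moreover have "beq (replicate i (A, True) @ [(A, True), (A, False)] @ []) (replicate i (A, True) @ [] @ [])"
    using bs_ctx[OF beq_letter_cancel[of "(A, True)"], of "replicate i (A, True)" "[]"]
    by (simp add: letter_inv_def)
  ultimately show ?thesis
    by simp
qed

lemma apow_pred: "beq (apow j @ [(A, True)]) (apow (j - 1))"
proof -
  have "beq (apow j @ [(A, True)]) ((apow (j - 1) @ [(A, False)]) @ [(A, True)])"
    using beq_append[OF beq_sym[OF apow_succ[of "j - 1"]] beq_refl] by simp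
  also have "\<dots> = apow (j - 1) @ [(A, False), (A, True)] @ []"
    by simp
  also have "beq \<dots> (apow (j - 1) @ [] @ [])"
    using bs_ctx[OF beq_letter_cancel[of "(A, False)"], of "apow (j - 1)" "[]"]
    by (simp add: letter_inv_def)
  finally show ?thesis
    by simp
qed

lemma apow_add: "beq (apow j @ apow k) (apow (j + k))"
proof (induction k rule: int_induct[where k = 0])
  case base
  then show ?case by simp
next
  case (step1 i)
  have "beq (apow j @ apow (i + 1)) ((apow j @ apow i) @ [(A, False)])"
    using beq_append[OF beq_refl beq_sym[OF apow_succ[of i]]] by simp
  also have "beq \<dots> (apow (j + i) @ [(A, False)])"
    using beq_append[OF step1.IH beq_refl] .
  also have "beq \<dots> (apow (j + (i + 1)))"
    using apow_succ[of "j + i"] by (simp add: add.assoc)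
  finally show ?case .
next
  case (step2 i)
  have "beq (apow j @ apow (i - 1)) ((apow j @ apow i) @ [(A, True)])"
    using beq_append[OF beq_refl beq_sym[OF apow_pred[of i]]] by simp
  also have "beq \<dots> (apow (j + i) @ [(A, True)])"
    using beq_append[OF step2.IH beq_refl] .
  also have "beq \<dots> (apow (j + (i - 1)))"
    using apow_pred[of "j + i"] by (simp add: algebra_simps)
  finally show ?case .
qed

lemma conj_apow_add:
  assumes "beq (word_inv g @ apow j @ g) (apow r)" "beq (word_inv g @ apow k @ g) (apow s)"
  shows "beq (word_inv g @ apow (j + k) @ g) (apow (r + s))"
proof -
  have "beq (word_inv g @ apow (j + k) @ g) (word_inv g @ (apow j @ [] @ apow k) @ g)"
    using bs_ctx[OF beq_sym[OF apow_add]] by simp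
  also have "beq \<dots> (word_inv g @ (apow j @ (g @ word_inv g) @ apow k) @ g)"
    by (intro bs_ctx beq_append beq_refl beq_sym[OF word_inv_right])
  also have "\<dots> = (word_inv g @ apow j @ g) @ (word_inv g @ apow k @ g)"
    by simp
  also have "beq \<dots> (apow r @ apow s)"
    by (rule beq_append[OF assms])
  also have "beq \<dots> (apow (r + s))"
    by (rule apow_add)
  finally show ?thesis .
qed

lemma conj_apow_uminus:
  assumes "beq (word_inv g @ apow j @ g) (apow r)"
  shows "beq (word_inv g @ apow (- j) @ g) (apow (- r))"
  using beq_word_inv[OF assms] by simp

lemma conj_apow_mult:
  assumes "beq (word_inv g @ apow j @ g) (apow r)"
  shows "beq (word_inv g @ apow (j * k) @ g) (apow (r * k))"
proof (induction k rule: int_induct[where k = 0])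
  case base
  show ?case
    using word_inv_left[of g] by simp
next
  case (step1 i)
  show ?case
    using conj_apow_add[OF step1.IH assms] by (simp add: algebra_simps)
next
  case (step2 i)
  show ?case
    using conj_apow_add[OF step2.IH conj_apow_uminus[OF assms]] by (simp add: algebra_simps)
qed

lemma letter_commensurates:
  "\<exists>j r. j \<noteq> 0 \<and> beq ([letter_inv x] @ apow j @ [x]) (apow r)"
proof (cases x rule: t_exp.cases)
  case (1 b)
  have "apow (if b then -1 else 1) = [x]"
    using 1 by (simp add: apow_def)
  moreover have "beq ([letter_inv x, x] @ [x]) ([] @ [x])"
    using beq_append[OF beq_letter_cancel[of "letter_inv x"] beq_refl] by simp
  ultimately show ?thesis
    by (intro exI[of _ "if b then -1 else 1"] exI[of _ "if b then -1 else 1"]) simp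
next
  case (2 b)
  have rel: "beq ([(T, False)] @ apow m @ [(T, True)]) (apow n)"
    by (rule bs_rel)
  show ?thesis
  proof (cases b)
    case True
    then show ?thesis
      using 2 rel m_nonzero by (intro exI[of _ m] exI[of _ n]) (simp add: letter_inv_def)
  next
    case False
    have "beq ([(T, True)] @ apow n @ [(T, False)]) (apow m)"
      using rel beq_conj_iff[of "[(T, False)]" "apow n" "apow m"] by (simp add: letter_inv_def beq_sym)
    then show ?thesis
      using 2 False n_nonzero by (intro exI[of _ n] exI[of _ m]) (simp add: letter_inv_def)
  qed
qed

lemma word_commensurates: "\<exists>j r. j \<noteq> 0 \<and> beq (word_inv g @ apow j @ g) (apow r)"
proof (induction g)
  case Nil
  show ?case
    by (intro exI[of _ 1]) simp
next
  case (Cons x h)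
  obtain j r where h: "j \<noteq> 0" "beq (word_inv h @ apow j @ h) (apow r)"
    using Cons.IH by blast
  obtain i s where x: "i \<noteq> 0" "beq (word_inv [x] @ apow i @ [x]) (apow s)"
    using letter_commensurates[of x] by auto
  have "beq (word_inv h @ (word_inv [x] @ apow (i * j) @ [x]) @ h) (word_inv h @ apow (s * j) @ h)"
    by (intro bs_ctx conj_apow_mult[OF x(2)])
  also have "beq \<dots> (apow (r * s))"
    using conj_apow_mult[OF h(2), of s] by (simp add: mult.commute)
  finally show ?case
    using h(1) x(1) by (intro exI[of _ "i * j"] exI[of _ "r * s"]) simp
qed

section \<open>Conjugation exponents via the affine action\<close>

abbreviation aff :: "word \<Rightarrow> real \<Rightarrow> real" where
  "aff \<equiv> word_aff m n"

lemma word_aff_affine: "aff w x = ratio powi t_exp_sum w * x + aff w 0"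
proof (induction w arbitrary: x)
  case Nil
  then show ?case by (simp add: t_exp_sum_def)
next
  case (Cons y w)
  have step: "aff (y # w) z = ratio powi t_exp y * aff w z + letter_aff m n y 0" for z
    using letter_aff_affine[of m n y "aff w z"] by simp
  moreover have "ratio powi t_exp_sum (y # w) = ratio powi t_exp y * ratio powi t_exp_sum w"
    using ratio_nonzero by (simp add: t_exp_sum_def power_int_add)
  ultimately show ?case
    using Cons.IH[of x] step[of x] step[of 0] by (simp add: algebra_simps)
qed

lemma letter_aff_letter_inv: "letter_aff m n (letter_inv y) (letter_aff m n y x) = x"
  using ratio_nonzero
  by (cases y rule: t_exp.cases) (auto simp: letter_inv_def power_int_minus field_simps)

lemma word_aff_word_inv: "aff (word_inv w) (aff w x) = x"
  by (induction w arbitrary: x) (simp_all add: letter_aff_letter_inv)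

lemma beq_word_aff: "beq u v \<Longrightarrow> aff u = aff v"
proof (induction rule: bs_eq.induct)
  case (bs_cancel g b)
  show ?case
    using letter_aff_letter_inv[of "(g, \<not> b)"] by (auto simp: letter_inv_def)
next
  case bs_rel
  show ?case
    using m_nonzero n_nonzero by (auto simp: word_aff_apow power_int_minus field_simps)
qed auto

lemma conj_apow_exponent:
  assumes "beq (word_inv g @ apow j @ g) (apow r)"
  shows "real_of_int r = ratio powi t_exp_sum (word_inv g) * real_of_int j"
proof -
  have "aff (word_inv g) (aff g 0 + j) = r"
    using fun_cong[OF beq_word_aff[OF assms], of 0] by (simp add: word_aff_apow)
  moreover have "aff (word_inv g) (aff g 0) = 0"
    by (rule word_aff_word_inv)
  moreover have "aff (word_inv g) (aff g 0 + j) - aff (word_inv g) (aff g 0)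
      = ratio powi t_exp_sum (word_inv g) * j"
    by (subst (1 2) word_aff_affine) (simp add: algebra_simps)
  ultimately show ?thesis
    by simp
qed

definition comm_exps :: "word \<Rightarrow> int set" where
  "comm_exps g = {j. \<exists>r. beq (word_inv g @ apow j @ g) (apow r)}"

lemma comm_exps_eq_multiples: "\<exists>p>0. comm_exps g = {j. p dvd j}"
proof -
  obtain j r where j: "j \<noteq> 0" "beq (word_inv g @ apow j @ g) (apow r)"
    using word_commensurates by blast
  show ?thesis
  proof (rule int_subgroup_eq_multiples)
    show "a - b \<in> comm_exps g" if "a \<in> comm_exps g" "b \<in> comm_exps g" for a b
      using that conj_apow_add[OF _ conj_apow_uminus, of g a _ b] by (auto simp: comm_exps_def)
    show "j \<in> comm_exps g" "j \<noteq> 0"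
      using j by (auto simp: comm_exps_def)
  qed
qed

lemma comm_exps_word_inv:
  assumes p: "comm_exps g = {j. p dvd j}" and q: "beq (word_inv g @ apow p @ g) (apow q)"
  shows "comm_exps (word_inv g) = {k. q dvd k}"
proof (intro equalityI subsetI)
  fix k assume "k \<in> comm_exps (word_inv g)"
  then obtain r where "beq (g @ apow k @ word_inv g) (apow r)"
    by (auto simp: comm_exps_def)
  then have r: "beq (word_inv g @ apow r @ g) (apow k)"
    using beq_conj_iff[of g "apow r" "apow k"] beq_sym by simp
  then have "r \<in> comm_exps g"
    by (auto simp: comm_exps_def)
  then obtain i where "r = p * i"
    using p by auto
  then have "real_of_int k = real_of_int (q * i)"
    using conj_apow_exponent[OF r] conj_apow_exponent[OF q] by simp
  then show "k \<in> {k. q dvd k}"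
    by (simp only: of_int_eq_iff) simp
next
  fix k assume "k \<in> {k. q dvd k}"
  then obtain i where "k = q * i"
    by auto
  then have "beq (word_inv g @ apow (p * i) @ g) (apow k)"
    using conj_apow_mult[OF q] by simp
  then have "beq (g @ apow k @ word_inv g) (apow (p * i))"
    using beq_conj_iff[of g "apow (p * i)" "apow k"] beq_sym by simp
  then show "k \<in> comm_exps (word_inv g)"
    by (auto simp: comm_exps_def)
qed

section \<open>The Schlichting completion G(m,n)\<close>

abbreviation coset :: "word \<Rightarrow> word set" where
  "coset \<equiv> bs_coset m n"

abbreviation cosets :: "word set set" where
  "cosets \<equiv> bs_cosets m n"

abbreviation iota :: "word \<Rightarrow> word set \<Rightarrow> word set" where
  "iota \<equiv> bs_iota m n"

lemma coset_in_cosets [simp]: "coset w \<in> cosets"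
  by (simp add: bs_cosets_def)

lemma coset_sub: "beq u (v @ apow k) \<Longrightarrow> coset u \<subseteq> coset v"
proof
  fix w assume uv: "beq u (v @ apow k)" and "w \<in> coset u"
  then obtain j where "beq w (u @ apow j)"
    unfolding bs_coset_def by blast
  also have "beq \<dots> ((v @ apow k) @ apow j)"
    by (rule beq_append[OF uv beq_refl])
  also have "beq \<dots> (v @ apow (k + j))"
    using beq_append[OF beq_refl[of v] apow_add[of k j]] by simp
  finally show "w \<in> coset v"
    unfolding bs_coset_def by blast
qed

lemma coset_eq_iff: "coset u = coset v \<longleftrightarrow> (\<exists>k. beq (word_inv v @ u) (apow k))"
proof
  assume "coset u = coset v"
  moreover have "u \<in> coset u"
    unfolding bs_coset_def by (intro CollectI exI[of _ 0]) simp
  ultimately have "u \<in> coset v"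
    by simp
  then obtain k where k: "beq u (v @ apow k)"
    unfolding bs_coset_def by blast
  have "beq (word_inv v @ u) ((word_inv v @ v) @ apow k)"
    using beq_append[OF beq_refl k] by simp
  also have "beq \<dots> ([] @ apow k)"
    by (rule beq_append[OF word_inv_left beq_refl])
  finally show "\<exists>k. beq (word_inv v @ u) (apow k)"
    by auto
next
  assume "\<exists>k. beq (word_inv v @ u) (apow k)"
  then obtain k where k: "beq (word_inv v @ u) (apow k)"
    by blast
  have "beq u ((v @ word_inv v) @ u)"
    using beq_append[OF beq_sym[OF word_inv_right[of v]] beq_refl[of u]] by simp
  also have "beq \<dots> (v @ apow k)"
    using beq_append[OF beq_refl[of v] k] by simp
  finally have uv: "beq u (v @ apow k)" .
  have "beq (u @ apow (- k)) (v @ apow k @ apow (- k))"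
    using beq_append[OF uv beq_refl] by simp
  also have "beq \<dots> (v @ apow 0)"
    using beq_append[OF beq_refl apow_add[of k "- k"]] by simp
  finally have "beq v (u @ apow (- k))"
    by (simp add: beq_sym)
  then show "coset u = coset v"
    using coset_sub[OF uv] coset_sub by blast
qed

lemma coset_beq: "beq u v \<Longrightarrow> coset u = coset v"
  unfolding coset_eq_iff
  using beq_trans[OF beq_append[OF beq_refl] word_inv_left] by (auto intro: exI[of _ 0])

lemma coset_apow_eq_iff: "coset (u @ apow k @ v) = coset (u @ apow l @ v) \<longleftrightarrow> k - l \<in> comm_exps v"
proof -
  have "word_inv (u @ apow l @ v) @ u @ apow k @ v
      = word_inv v @ (apow (- l) @ (word_inv u @ u) @ apow k) @ v"
    by simp
  also have "beq \<dots> (word_inv v @ (apow (- l) @ [] @ apow k) @ v)"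
    by (intro bs_ctx beq_append beq_refl word_inv_left)
  also have "beq \<dots> (word_inv v @ apow (k - l) @ v)"
    using bs_ctx[OF apow_add[of "- l" k]] by simp
  finally have e: "beq (word_inv (u @ apow l @ v) @ u @ apow k @ v) (word_inv v @ apow (k - l) @ v)" .
  show ?thesis
    unfolding coset_eq_iff comm_exps_def
    using beq_trans[OF beq_sym[OF e]] beq_trans[OF e] by blast
qed

lemma card_coset_orbit:
  assumes "p > 0" "comm_exps v = {j. p dvd j}"
  shows "card (range (\<lambda>k. coset (u @ apow k @ v))) = nat p"
  using assms by (intro card_range_periodic_int) (simp_all add: coset_apow_eq_iff)

lemma iota_coset [simp]: "iota g (coset v) = coset (g @ v)"
proof -
  have "{u. \<exists>v'\<in>coset v. beq u (g @ v')} = coset (g @ v)"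
  proof (intro equalityI subsetI)
    fix u assume "u \<in> {u. \<exists>v'\<in>coset v. beq u (g @ v')}"
    then obtain v' k where "beq u (g @ v')" "beq v' (v @ apow k)"
      unfolding bs_coset_def by blast
    then have "beq u ((g @ v) @ apow k)"
      using beq_trans[OF _ beq_append[OF beq_refl]] by fastforce
    then show "u \<in> coset (g @ v)"
      unfolding bs_coset_def by blast
  next
    fix u assume "u \<in> coset (g @ v)"
    then obtain k where "beq u (g @ v @ apow k)"
      unfolding bs_coset_def by auto
    moreover have "v @ apow k \<in> coset v"
      unfolding bs_coset_def using beq_refl by blast
    ultimately show "u \<in> {u. \<exists>v'\<in>coset v. beq u (g @ v')}"
      by blast
  qed
  then show ?thesis
    by (simp add: bs_iota_def)
qed

lemma cosets_cases: "C \<in> cosets \<Longrightarrow> (\<And>v. C = coset v \<Longrightarrow> P) \<Longrightarrow> P"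
  by (auto simp: bs_cosets_def)

lemma iota_extensional: "iota g \<in> extensional cosets"
  by (simp add: bs_iota_def)

lemma iota_beq: "beq g h \<Longrightarrow> iota g = iota h"
  by (rule extensionalityI[OF iota_extensional iota_extensional])
    (erule cosets_cases, simp add: coset_beq beq_append)

lemma compose_iota: "compose cosets (iota g) (iota h) = iota (g @ h)"
  by (rule extensionalityI[OF compose_extensional iota_extensional])
    (erule cosets_cases, simp add: compose_eq)

lemma iota_Nil: "iota [] = (\<lambda>C\<in>cosets. C)"
  by (rule extensionalityI[OF iota_extensional restrict_extensional])
    (erule cosets_cases, simp)

lemma iota_Bij: "iota g \<in> Bij cosets"
proof -
  have "compose cosets (iota (word_inv g)) (iota g) = (\<lambda>C\<in>cosets. C)"
    and "compose cosets (iota g) (iota (word_inv g)) = (\<lambda>C\<in>cosets. C)"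
    by (simp_all add: compose_iota iota_beq[OF word_inv_left] iota_beq[OF word_inv_right] iota_Nil)
  then have "bij_betw (iota g) cosets cosets"
    by (intro bij_betw_byWitness[where f' = "iota (word_inv g)"])
       (auto simp: compose_def restrict_def fun_eq_iff elim!: cosets_cases split: if_splits)
  then show ?thesis
    by (simp add: Bij_def bs_iota_def)
qed

lemma subgroup_range_iota: "subgroup (range iota) (BijGroup cosets)"
proof (rule group.subgroupI[OF group_BijGroup])
  show "range iota \<subseteq> carrier (BijGroup cosets)"
    using iota_Bij by (auto simp: BijGroup_def)
  show "range iota \<noteq> {}"
    by blast
next
  fix \<sigma> assume "\<sigma> \<in> range iota"
  then obtain g where g: "\<sigma> = iota g"
    by blast
  have "iota (word_inv g) \<otimes>\<^bsub>BijGroup cosets\<^esub> \<sigma> = \<one>\<^bsub>BijGroup cosets\<^esub>"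
    using iota_Bij
    by (simp add: g BijGroup_def compose_iota iota_beq[OF word_inv_left] iota_Nil)
  then have "inv\<^bsub>BijGroup cosets\<^esub> \<sigma> = iota (word_inv g)"
    using iota_Bij by (intro group.inv_equality[OF group_BijGroup]) (auto simp: g BijGroup_def)
  then show "inv\<^bsub>BijGroup cosets\<^esub> \<sigma> \<in> range iota"
    by simp
next
  fix \<sigma> \<tau> assume "\<sigma> \<in> range iota" "\<tau> \<in> range iota"
  then show "\<sigma> \<otimes>\<^bsub>BijGroup cosets\<^esub> \<tau> \<in> range iota"
    using iota_Bij by (auto simp: BijGroup_def compose_iota)
qed

lemma Gmn_eq_pointwise_closure:
  "Gmn m n = BijGroup cosets\<lparr>carrier := pointwise_closure cosets (range iota)\<rparr>"
  by (simp add: Gmn_def G_carrier_def pointwise_closure_def)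

lemma Gmn_action: "group_action (Gmn m n) cosets (\<lambda>\<sigma>. \<sigma>)"
  unfolding Gmn_eq_pointwise_closure
  by (rule group_action.restrict_to_subgroup[OF group_action_BijGroup
        subgroup_pointwise_closure[OF subgroup_range_iota]])

lemma iota_in_carrier: "iota g \<in> carrier (Gmn m n)"
  using iota_Bij by (auto simp: Gmn_eq_pointwise_closure pointwise_closure_def)

lemma G_U_eq_stabilizer: "G_U m n = stabilizer (Gmn m n) (\<lambda>\<sigma>. \<sigma>) (coset [])"
  by (simp add: G_U_def stabilizer_def Gmn_def)

lemma stabilizer_orbit:
  "(\<lambda>\<tau>. \<tau> (coset y)) ` stabilizer (Gmn m n) (\<lambda>\<sigma>. \<sigma>) (coset h)
     = range (\<lambda>k. coset (h @ apow k @ word_inv h @ y))"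
proof (intro equalityI subsetI)
  fix C assume "C \<in> (\<lambda>\<tau>. \<tau> (coset y)) ` stabilizer (Gmn m n) (\<lambda>\<sigma>. \<sigma>) (coset h)"
  then obtain \<tau> where \<tau>: "\<tau> \<in> pointwise_closure cosets (range iota)" "\<tau> (coset h) = coset h"
    and C: "C = \<tau> (coset y)"
    by (auto simp: stabilizer_def Gmn_eq_pointwise_closure)
  obtain w where w: "\<forall>x\<in>{coset h, coset y}. iota w x = \<tau> x"
    using pointwise_closureD[OF \<tau>(1), of "{coset h, coset y}"] by auto
  then have "coset (w @ h) = coset h"
    using \<tau>(2) by simp
  then obtain k where "beq (word_inv h @ w @ h) (apow k)"
    unfolding coset_eq_iff by auto
  then have "beq (w @ y) ((h @ apow k @ word_inv h) @ y)"
    using beq_append[OF _ beq_refl] beq_conj_iff by blast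
  then have "C = coset (h @ apow k @ word_inv h @ y)"
    using w C coset_beq by simp
  then show "C \<in> range (\<lambda>k. coset (h @ apow k @ word_inv h @ y))"
    by blast
next
  fix C assume "C \<in> range (\<lambda>k. coset (h @ apow k @ word_inv h @ y))"
  then obtain k where C: "C = iota (h @ apow k @ word_inv h) (coset y)"
    by auto
  have "beq (word_inv h @ (h @ apow k @ word_inv h) @ h) (apow k)"
    by (rule beq_conj_cancel)
  then have "iota (h @ apow k @ word_inv h) (coset h) = coset h"
    unfolding iota_coset coset_eq_iff by auto
  then have "iota (h @ apow k @ word_inv h) \<in> stabilizer (Gmn m n) (\<lambda>\<sigma>. \<sigma>) (coset h)"
    using iota_in_carrier by (simp add: stabilizer_def)
  then show "C \<in> (\<lambda>\<tau>. \<tau> (coset y)) ` stabilizer (Gmn m n) (\<lambda>\<sigma>. \<sigma>) (coset h)"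
    unfolding C by (rule imageI)
qed

lemma modular_fn_value:
  assumes \<sigma>: "\<sigma> \<in> carrier (Gmn m n)" and g: "\<sigma> (coset []) = coset g"
  shows "modular_fn (Gmn m n) (G_U m n) \<sigma> = \<bar>ratio\<bar> powi (- t_exp_sum g)"
proof -
  obtain p where p: "p > 0" "comm_exps g = {j. p dvd j}"
    using comm_exps_eq_multiples by blast
  then have "p \<in> comm_exps g"
    by simp
  then obtain q where q: "beq (word_inv g @ apow p @ g) (apow q)"
    by (auto simp: comm_exps_def)
  have q_p: "real_of_int q = ratio powi (- t_exp_sum g) * real_of_int p"
    using conj_apow_exponent[OF q] by simp
  then have "q \<noteq> 0"
    using p(1) ratio_nonzero by auto
  have "comm_exps (word_inv g) = {k. \<bar>q\<bar> dvd k}"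
    using comm_exps_word_inv[OF p(2) q] by simp
  then have num: "card (range (\<lambda>k. coset (g @ apow k @ word_inv g))) = nat \<bar>q\<bar>"
    using card_coset_orbit \<open>q \<noteq> 0\<close> by simp
  have den: "card (range (\<lambda>k. coset ([] @ apow k @ g))) = nat p"
    using card_coset_orbit[OF p] .
  have "modular_fn (Gmn m n) (G_U m n) \<sigma> = real (nat \<bar>q\<bar>) / real (nat p)"
    using group_action.modular_fn_stabilizer[OF Gmn_action coset_in_cosets \<sigma>, of "[]"]
      stabilizer_orbit[of "[]" g] stabilizer_orbit[of g "[]"] num den
    by (simp add: g G_U_eq_stabilizer)
  also have "\<dots> = \<bar>ratio\<bar> powi (- t_exp_sum g)"
    using q_p p(1) by (simp add: abs_mult power_int_abs)
  finally show ?thesis .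
qed

lemma modular_fn_image:
  "modular_fn (Gmn m n) (G_U m n) ` carrier (Gmn m n) = {\<bar>ratio\<bar> powi k | k :: int. True}"
proof (intro equalityI subsetI)
  fix r assume "r \<in> modular_fn (Gmn m n) (G_U m n) ` carrier (Gmn m n)"
  then obtain \<sigma> where \<sigma>: "\<sigma> \<in> carrier (Gmn m n)" and r: "r = modular_fn (Gmn m n) (G_U m n) \<sigma>"
    by blast
  have "\<sigma> (coset []) \<in> cosets"
    using group_action.element_image[OF Gmn_action \<sigma> coset_in_cosets] by blast
  then obtain g where "\<sigma> (coset []) = coset g"
    by (auto simp: bs_cosets_def)
  then show "r \<in> {\<bar>ratio\<bar> powi k | k :: int. True}"
    using modular_fn_value[OF \<sigma>] r by blast
next
  fix r assume "r \<in> {\<bar>ratio\<bar> powi k | k :: int. True}"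
  then obtain k where r: "r = \<bar>ratio\<bar> powi k"
    by blast
  obtain g where "t_exp_sum g = - k"
    using t_exp_sum_surj by blast
  then have "modular_fn (Gmn m n) (G_U m n) (iota g) = r"
    using modular_fn_value[OF iota_in_carrier, of g g] r by simp
  then show "r \<in> modular_fn (Gmn m n) (G_U m n) ` carrier (Gmn m n)"
    using iota_in_carrier by blast
qed

end

theorem lemma9p1:
  fixes m n :: int
  assumes "m \<noteq> 0" and "n \<noteq> 0"
  shows "modular_fn (Gmn m n) (G_U m n) ` carrier (Gmn m n)
           = {\<bar>real_of_int m / real_of_int n\<bar> powi k | k :: int. True}"
proof -
  interpret baumslag_solitar m n
    using assms by unfold_locales
  show ?thesis
    by (rule modular_fn_image)
qed

end
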